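(* Let $k$ be a positive integer and let $G \in \mathcal{C}_3$ be a digraph with $n$ vertices and $m \geq 1$ arcs such that $\vec{\chi}(G) = k$. Let $I$ be an independent set of $G$. Then there exists a digraph $H \in \mathcal{C}_3$ containing $m$ pairwise vertex-disjoint copies $G_1,\dots,G_m$ of $G$ such that: (i) for all $1 \leq i \neq j \leq m$, there is no arc of $H$ between $V(G_i)$ and $V(G_j)$; (ii) for every $k$-dicolouring of $H$, there exist an index $i \in \{1,\dots,m\}$ and a colour $\alpha$ such that no vertex of the copy of $I$ in $G_i$ receives colour $\alpha$. Moreover, $H$ has $n(m+1) \leq n^4$ vertices and at most $m(m+1) + m n^2 \leq n^4$ arcs.
   Context: All digraphs are finite and simple: no loops, no multiple arcs, and for two distinct vertices $u,v$ at most one of the arcs $uv$, $vu$ is present. A $k$-dicolouring of a digraph $D$ is a partition of $V(D)$ into $k$ sets $V_1,\dots,V_k$ (some possibly empty), the colour classes, such that each induced subdigraph $D[V_i]$ is acyclic (contains no directed cycle). The dichromatic number $\vec{\chi}(D)$ is the smallest $k$ such that $D$ admits a $k$-dicolouring. $TT_3$ denotes the transitive tournament on 3 vertices; $\mathcal{C}_3$ is the class of digraphs that contain no $TT_3$ as a subdigraph and contain no induced directed cycle of length at least $4$. An independent set is a set of vertices no two of which are joined by an arc. A copy of $G$ in $H$ is an induced subdigraph of $H$ together with a fixed isomorphism from $G$ onto it; the copy of $I$ in that copy is the image of $I$ under this isomorphism. *)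

theory Defs
  imports Main
begin

definition digraph :: "'a set \<Rightarrow> ('a \<times> 'a) set \<Rightarrow> bool" where
  "digraph V A \<longleftrightarrow> finite V \<and> A \<subseteq> V \<times> V \<and> (\<forall>v. (v, v) \<notin> A)
     \<and> (\<forall>u v. (u, v) \<in> A \<longrightarrow> (v, u) \<notin> A)"

definition induced_arcs :: "('a \<times> 'a) set \<Rightarrow> 'a set \<Rightarrow> ('a \<times> 'a) set" where
  "induced_arcs A S = A \<inter> (S \<times> S)"

definition dicolouring :: "'a set \<Rightarrow> ('a \<times> 'a) set \<Rightarrow> nat \<Rightarrow> ('a \<Rightarrow> nat) \<Rightarrow> bool" where
  "dicolouring V A k c \<longleftrightarrow> (\<forall>v\<in>V. c v < k)
     \<and> (\<forall>i<k. acyclic (induced_arcs A {v \<in> V. c v = i}))"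

definition dichromatic_number :: "'a set \<Rightarrow> ('a \<times> 'a) set \<Rightarrow> nat" where
  "dichromatic_number V A = (LEAST k. \<exists>c. dicolouring V A k c)"

definition has_TT3 :: "'a set \<Rightarrow> ('a \<times> 'a) set \<Rightarrow> bool" where
  "has_TT3 V A \<longleftrightarrow> (\<exists>x\<in>V. \<exists>y\<in>V. \<exists>z\<in>V. x \<noteq> y \<and> y \<noteq> z \<and> x \<noteq> z
       \<and> (x, y) \<in> A \<and> (y, z) \<in> A \<and> (x, z) \<in> A)"

definition induced_dicycle :: "'a set \<Rightarrow> ('a \<times> 'a) set \<Rightarrow> 'a list \<Rightarrow> bool" where
  "induced_dicycle V A vs \<longleftrightarrow> distinct vs \<and> set vs \<subseteq> V \<and> length vs \<ge> 2
     \<and> (\<forall>i < length vs. \<forall>j < length vs.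
          (vs ! i, vs ! j) \<in> A \<longleftrightarrow> j = Suc i mod length vs)"

definition class_C3 :: "'a set \<Rightarrow> ('a \<times> 'a) set \<Rightarrow> bool" where
  "class_C3 V A \<longleftrightarrow> digraph V A \<and> \<not> has_TT3 V A
     \<and> \<not> (\<exists>vs. induced_dicycle V A vs \<and> length vs \<ge> 4)"

definition independent_set :: "'a set \<Rightarrow> ('a \<times> 'a) set \<Rightarrow> 'a set \<Rightarrow> bool" where
  "independent_set V A I \<longleftrightarrow> I \<subseteq> V \<and> (\<forall>u\<in>I. \<forall>v\<in>I. (u, v) \<notin> A)"

definition is_copy :: "'a set \<Rightarrow> ('a \<times> 'a) set \<Rightarrow> 'b set \<Rightarrow> ('b \<times> 'b) set \<Rightarrow> ('a \<Rightarrow> 'b) \<Rightarrow> bool" where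
  "is_copy V A W B f \<longleftrightarrow> inj_on f V \<and> f ` V \<subseteq> W
     \<and> (\<forall>u\<in>V. \<forall>v\<in>V. (f u, f v) \<in> B \<longleftrightarrow> (u, v) \<in> A)"

end

theory Submission
  imports Defs
begin

text \<open>Take copies \<open>G\<^sub>0, \<dots>, G\<^sub>m\<close> of \<open>G\<close> and match the \<open>m\<close> arcs of \<open>G\<^sub>0\<close> with the other copies:
  for the \<open>j\<close>-th arc \<open>xy\<close> of \<open>G\<^sub>0\<close>, add arcs from \<open>y\<close> to every vertex of the copy of \<open>I\<close> in
  \<open>G\<^sub>j\<close> and from each of these to \<open>x\<close>. The new arcs only close directed triangles \<open>x y v\<close>, so
  the result stays in \<open>\<C>\<^sub>3\<close>: an induced dicycle of length at least 4 leaving a copy would contain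
  such a triangle. A \<open>k\<close>-dicolouring restricted to \<open>G\<^sub>0\<close> has a monochromatic arc \<open>xy\<close>, since
  otherwise two colour classes could be merged (in \<open>\<C>\<^sub>3\<close> every induced dicycle is a triangle, so a
  properly 2-coloured vertex set induces an acyclic subdigraph), contradicting \<open>\<chi>(G) = k\<close>. If
  \<open>xy\<close> is the \<open>j\<close>-th arc, the colour of \<open>x\<close> is missing on the copy of \<open>I\<close> in \<open>G\<^sub>j\<close>, as
  otherwise some triangle \<open>x y v\<close> would be monochromatic.\<close>

section \<open>Shortest closed walks\<close>

text \<open>A closed walk of length \<open>l\<close> is encoded as an \<open>l\<close>-periodic sequence, so that it can be
  rotated freely.\<close>
definition closed_walk :: "('a \<times> 'a) set \<Rightarrow> nat \<Rightarrow> (nat \<Rightarrow> 'a) \<Rightarrow> bool" where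
  "closed_walk R l g \<longleftrightarrow> 1 \<le> l \<and> (\<forall>t. g (t + l) = g t) \<and> (\<forall>t. (g t, g (Suc t)) \<in> R)"

lemma closed_walk_arc: "closed_walk R l g \<Longrightarrow> (g t, g (Suc t)) \<in> R"
  by (simp add: closed_walk_def)

lemma closed_walk_mod:
  assumes "closed_walk R l g" shows "g (t mod l) = g t"
proof -
  have "g (s + q * l) = g s" for s q
  proof (induction q)
    case (Suc q)
    have "g (s + Suc q * l) = g ((s + q * l) + l)" by (simp add: algebra_simps)
    with assms Suc show ?case by (simp add: closed_walk_def)
  qed simp
  from this[of "t mod l" "t div l"] show ?thesis by simp
qed

lemma closed_walk_shift:
  assumes "closed_walk R l g" shows "closed_walk R l (\<lambda>t. g (t + i))"
  using assms unfolding closed_walk_def by (metis add.commute add.left_commute add_Suc)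

lemma not_acyclic_imp_closed_walk:
  assumes "\<not> acyclic R" obtains l g where "closed_walk R l g"
proof -
  obtain x where "(x, x) \<in> R\<^sup>+" using assms by (auto simp: acyclic_def)
  then obtain n where n: "n > 0" "(x, x) \<in> R ^^ n" by (auto simp: trancl_power)
  then obtain f where f: "f 0 = x" "f n = x" "\<forall>i<n. (f i, f (Suc i)) \<in> R"
    by (auto simp: relpow_fun_conv)
  have "(f (t mod n), f (Suc t mod n)) \<in> R" for t
  proof (cases "Suc (t mod n) = n")
    case True
    then show ?thesis using f n by (metis lessI mod_Suc)
  next
    case False
    then show ?thesis using f n by (simp add: mod_Suc)
  qed
  then have "closed_walk R n (\<lambda>t. f (t mod n))"
    using n by (simp add: closed_walk_def)
  then show thesis by (rule that)
qed

text \<open>Replacing the segment from \<open>g 0\<close> to \<open>g d\<close> by the chord \<open>(g 0, g d)\<close>.\<close>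
lemma closed_walk_shortcut:
  assumes c: "closed_walk R l g" and d: "2 \<le> d" "d < l" and chord: "(g 0, g d) \<in> R"
  shows "closed_walk R (l - d + 1)
           (\<lambda>t. if t mod (l - d + 1) = 0 then g 0 else g (d + t mod (l - d + 1) - 1))"
    (is "closed_walk R ?l ?h")
  unfolding closed_walk_def
proof (intro conjI allI)
  fix t
  show "?h (t + ?l) = ?h t" by (simp only: mod_add_self2)
  have gl: "g l = g 0" using closed_walk_mod[OF c, of l] by simp
  show "(?h t, ?h (Suc t)) \<in> R"
  proof (cases "t mod ?l = 0")
    case True
    then have "Suc t mod ?l = 1" using d by (simp add: mod_Suc)
    then show ?thesis using True chord by simp
  next
    case nonzero: False
    show ?thesis
    proof (cases "Suc (t mod ?l) = ?l")
      case True
      then have "Suc t mod ?l = 0" "d + t mod ?l - 1 = l - 1" using d by (simp_all add: mod_Suc)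
      then show ?thesis using nonzero closed_walk_arc[OF c, of "l - 1"] gl d by simp
    next
      case False
      then have "Suc t mod ?l = Suc (t mod ?l)" by (simp add: mod_Suc)
      then show ?thesis using nonzero closed_walk_arc[OF c, of "d + t mod ?l - 1"] by simp
    qed
  qed
qed simp

lemma closed_walk_subwalk:
  assumes c: "closed_walk R l g" and "i < j" and eq: "g i = g j"
  shows "closed_walk R (j - i) (\<lambda>t. g (i + t mod (j - i)))" (is "closed_walk R ?p ?h")
  unfolding closed_walk_def
proof (intro conjI allI)
  show "1 \<le> ?p" using \<open>i < j\<close> by simp
  fix t
  show "?h (t + ?p) = ?h t" by (simp only: mod_add_self2)
  show "(?h t, ?h (Suc t)) \<in> R"
  proof (cases "Suc (t mod ?p) = ?p")
    case True
    then have "Suc t mod ?p = 0" "Suc (i + t mod ?p) = j" using \<open>i < j\<close> by (simp_all add: mod_Suc)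
    then show ?thesis using closed_walk_arc[OF c, of "i + t mod ?p"] eq by simp
  next
    case False
    then have "Suc t mod ?p = Suc (t mod ?p)" by (simp add: mod_Suc)
    then show ?thesis using closed_walk_arc[OF c, of "i + t mod ?p"] by simp
  qed
qed

lemma shortest_closed_walk_inj:
  assumes c: "closed_walk R l g" and shortest: "\<And>l' g'. closed_walk R l' g' \<Longrightarrow> l \<le> l'"
  shows "inj_on g {..<l}"
proof -
  have "g a \<noteq> g b" if "a < b" "b < l" for a b
    using shortest[OF closed_walk_subwalk[OF c \<open>a < b\<close>]] that by fastforce
  then show ?thesis by (metis inj_onI lessThan_iff linorder_neqE_nat)
qed

lemma shortest_closed_walk_chordless:
  assumes c: "closed_walk R l g" and shortest: "\<And>l' g'. closed_walk R l' g' \<Longrightarrow> l \<le> l'"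
    and ij: "i < l" "j < l" and chord: "(g i, g j) \<in> R"
  shows "j = Suc i mod l"
proof (cases "i = j")
  case True
  then have "closed_walk R 1 (\<lambda>_. g i)" using chord by (simp add: closed_walk_def)
  then have "l = 1" using shortest ij by fastforce
  then show ?thesis using ij by simp
next
  case False
  define d where "d = (j + l - i) mod l"
  have "(d + i) mod l = (j + l) mod l"
    unfolding d_def using ij by (simp add: mod_add_left_eq)
  then have d_i: "(d + i) mod l = j" using ij by simp
  have "d < l" using ij by (simp add: d_def)
  have "d \<noteq> 0" using d_i ij False by (metis add_0 mod_less)
  show ?thesis
  proof (rule ccontr)
    assume "j \<noteq> Suc i mod l"
    then have "d \<noteq> 1" using d_i by (metis plus_1_eq_Suc)
    have c': "closed_walk R l (\<lambda>t. g (t + i))" by (rule closed_walk_shift[OF c])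
    have "2 \<le> d" using \<open>d \<noteq> 0\<close> \<open>d \<noteq> 1\<close> by linarith
    moreover have "(g (0 + i), g (d + i)) \<in> R"
      using chord d_i closed_walk_mod[OF c, of "d + i"] by simp
    ultimately have "l \<le> l - d + 1"
      using shortest[OF closed_walk_shortcut[OF c' _ \<open>d < l\<close>]] by blast
    with \<open>2 \<le> d\<close> \<open>d < l\<close> show False by linarith
  qed
qed

lemma not_acyclic_imp_shortest_closed_walk:
  assumes "\<not> acyclic R"
  obtains l g where "closed_walk R l g" and "\<And>l' g'. closed_walk R l' g' \<Longrightarrow> l \<le> l'"
proof -
  have ex: "\<exists>l g. closed_walk R l g" using not_acyclic_imp_closed_walk[OF assms] by metis
  define L where "L = (LEAST l. \<exists>g. closed_walk R l g)"
  obtain g where "closed_walk R L g" using LeastI_ex[OF ex] unfolding L_def by blast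
  moreover have "L \<le> l'" if "closed_walk R l' g'" for l' g'
    unfolding L_def using that by (blast intro: Least_le)
  ultimately show thesis using that by blast
qed

lemma not_acyclic_induced_arcs_imp_induced_dicycle:
  assumes dg: "digraph V A" and "S \<subseteq> V" and "\<not> acyclic (induced_arcs A S)"
  obtains vs where "induced_dicycle V A vs" "set vs \<subseteq> S"
proof -
  let ?R = "induced_arcs A S"
  obtain l g where c: "closed_walk ?R l g"
    and shortest: "\<And>l' g'. closed_walk ?R l' g' \<Longrightarrow> l \<le> l'"
    using not_acyclic_imp_shortest_closed_walk[OF assms(3)] by blast
  have arc: "(g t, g (Suc t)) \<in> A" "g t \<in> S" for t
    using closed_walk_arc[OF c, of t] by (auto simp: induced_arcs_def)
  have "l \<noteq> 1"
  proof
    assume "l = 1"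
    then have "g (Suc 0) = g 0" using closed_walk_mod[OF c, of 1] by simp
    then show False using arc(1)[of 0] dg by (simp add: digraph_def)
  qed
  then have "2 \<le> l" using c by (simp add: closed_walk_def)
  have "(g i, g j) \<in> A \<longleftrightarrow> j = Suc i mod l" if "i < l" "j < l" for i j
  proof
    assume "(g i, g j) \<in> A"
    then have "(g i, g j) \<in> ?R" using arc(2) by (simp add: induced_arcs_def)
    with c shortest that show "j = Suc i mod l" by (rule shortest_closed_walk_chordless)
  qed (use arc closed_walk_mod[OF c] in auto)
  then have "induced_dicycle V A (map g [0..<l])"
    using shortest_closed_walk_inj[OF c shortest] \<open>2 \<le> l\<close> arc(2) \<open>S \<subseteq> V\<close>
    by (auto simp: induced_dicycle_def distinct_map lessThan_atLeast0)
  moreover have "set (map g [0..<l]) \<subseteq> S" using arc(2) by auto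
  ultimately show thesis by (rule that)
qed

section \<open>Induced dicycles and dicolourings in \<open>\<C>\<^sub>3\<close>\<close>

lemma induced_dicycle_arc_iff:
  assumes "induced_dicycle V A vs" "i < length vs" "j < length vs"
  shows "(vs ! i, vs ! j) \<in> A \<longleftrightarrow> j = Suc i mod length vs"
  using assms by (simp add: induced_dicycle_def)

lemma induced_dicycle_arc:
  assumes "induced_dicycle V A vs" "i < length vs"
  shows "(vs ! i, vs ! (Suc i mod length vs)) \<in> A"
proof -
  have "0 < length vs" using assms(2) by linarith
  then show ?thesis using induced_dicycle_arc_iff[OF assms, of "Suc i mod length vs"] by simp
qed

lemma induced_dicycle_map:
  assumes vs: "induced_dicycle V A vs" and "inj_on h (set vs)" and "h ` set vs \<subseteq> V'"
    and arcs: "\<And>x y. x \<in> set vs \<Longrightarrow> y \<in> set vs \<Longrightarrow> (h x, h y) \<in> A' \<longleftrightarrow> (x, y) \<in> A"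
  shows "induced_dicycle V' A' (map h vs)"
  unfolding induced_dicycle_def
proof (intro conjI allI impI)
  fix i j assume "i < length (map h vs)" "j < length (map h vs)"
  then show "(map h vs ! i, map h vs ! j) \<in> A' \<longleftrightarrow> j = Suc i mod length (map h vs)"
    using arcs induced_dicycle_arc_iff[OF vs] by simp
qed (use assms in \<open>auto simp: induced_dicycle_def distinct_map\<close>)

lemma induced_dicycle_no_triangle:
  assumes vs: "induced_dicycle V A vs" and "4 \<le> length vs"
    and "x \<in> set vs" "y \<in> set vs" "z \<in> set vs"
    and "(x, y) \<in> A" "(y, z) \<in> A" "(z, x) \<in> A"
  shows False
proof -
  define L where "L = length vs"
  obtain a b c where abc: "a < L" "b < L" "c < L" "x = vs ! a" "y = vs ! b" "z = vs ! c"
    using assms(3-5) unfolding L_def by (metis in_set_conv_nth)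
  have steps: "b = Suc a mod L" "c = Suc b mod L" "a = Suc c mod L"
    using assms(6-8) abc induced_dicycle_arc_iff[OF vs] unfolding L_def by simp_all
  have "b = Suc a \<or> Suc a = L \<and> b = 0" unfolding steps(1) using abc(1) by (simp add: mod_Suc)
  moreover have "c = Suc b \<or> Suc b = L \<and> c = 0" unfolding steps(2) using abc(2) by (simp add: mod_Suc)
  moreover have "a = Suc c \<or> Suc c = L \<and> a = 0" unfolding steps(3) using abc(3) by (simp add: mod_Suc)
  ultimately show False using \<open>4 \<le> length vs\<close> unfolding L_def by (elim disjE conjE) linarith+
qed

lemma class_C3_induced_dicycle_length:
  assumes C3: "class_C3 V A" and vs: "induced_dicycle V A vs"
  shows "length vs = 3"
proof -
  have "2 \<le> length vs" "length vs < 4"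
    using assms by (auto simp: class_C3_def induced_dicycle_def)
  moreover have "length vs \<noteq> 2"
  proof
    assume "length vs = 2"
    then have "(vs ! 0, vs ! 1) \<in> A" "(vs ! 1, vs ! 0) \<in> A"
      using induced_dicycle_arc[OF vs, of 0] induced_dicycle_arc[OF vs, of 1] by simp_all
    then show False using C3 by (auto simp: class_C3_def digraph_def)
  qed
  ultimately show ?thesis by linarith
qed

lemma class_C3_two_coloured_acyclic:
  fixes c :: "'a \<Rightarrow> nat"
  assumes C3: "class_C3 V A" and "S \<subseteq> V" and two: "\<forall>v\<in>S. c v \<le> 1"
    and proper: "\<forall>x\<in>S. \<forall>y\<in>S. (x, y) \<in> A \<longrightarrow> c x \<noteq> c y"
  shows "acyclic (induced_arcs A S)"
proof (rule ccontr)
  assume "\<not> acyclic (induced_arcs A S)"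
  moreover have "digraph V A" using C3 by (simp add: class_C3_def)
  ultimately obtain vs where vs: "induced_dicycle V A vs" "set vs \<subseteq> S"
    using not_acyclic_induced_arcs_imp_induced_dicycle \<open>S \<subseteq> V\<close> by blast
  have L: "length vs = 3" by (rule class_C3_induced_dicycle_length[OF C3 vs(1)])
  then have "(vs ! 0, vs ! 1) \<in> A" "(vs ! 1, vs ! 2) \<in> A" "(vs ! 2, vs ! 0) \<in> A"
    using induced_dicycle_arc[OF vs(1), of 0] induced_dicycle_arc[OF vs(1), of 1]
      induced_dicycle_arc[OF vs(1), of 2] by (simp_all add: numeral_2_eq_2)
  moreover have "vs ! i \<in> S" if "i < 3" for i using L that vs(2) nth_mem by fastforce
  ultimately have "c (vs ! 0) \<noteq> c (vs ! 1)" "c (vs ! 1) \<noteq> c (vs ! 2)" "c (vs ! 2) \<noteq> c (vs ! 0)"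
    "c (vs ! 0) \<le> 1" "c (vs ! 1) \<le> 1" "c (vs ! 2) \<le> 1"
    using proper two by simp_all
  then show False by linarith
qed

lemma class_C3_no_transitive_arcs:
  assumes "class_C3 V A" and "(u, v) \<in> A" "(v, w) \<in> A" "(u, w) \<in> A"
  shows False
proof -
  have dg: "digraph V A" and "\<not> has_TT3 V A" using assms(1) by (auto simp: class_C3_def)
  have "u \<in> V" "v \<in> V" "w \<in> V" "u \<noteq> v" "v \<noteq> w" "u \<noteq> w"
    using dg assms(2-4) unfolding digraph_def by auto
  then show False using \<open>\<not> has_TT3 V A\<close> assms(2-4) unfolding has_TT3_def by blast
qed

lemma acyclic_hom_preimage:
  assumes "acyclic S" and hom: "\<And>x y. (x, y) \<in> R \<Longrightarrow> (h x, h y) \<in> S"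
  shows "acyclic R"
proof -
  have "(h x, h y) \<in> S\<^sup>+" if "(x, y) \<in> R\<^sup>+" for x y
    using that by induction (auto intro: hom trancl_into_trancl)
  then show ?thesis using \<open>acyclic S\<close> by (auto simp: acyclic_def)
qed

lemma triangle_not_acyclic:
  assumes "(x, y) \<in> R" "(y, z) \<in> R" "(z, x) \<in> R"
  shows "\<not> acyclic R"
proof -
  have "(x, x) \<in> R\<^sup>+" using assms by (meson trancl.r_into_trancl trancl_into_trancl2)
  then show ?thesis by (auto simp: acyclic_def)
qed

lemma dicolouring_comp:
  assumes c: "dicolouring W B k c" and "h ` V \<subseteq> W"
    and hom: "\<And>u v. u \<in> V \<Longrightarrow> v \<in> V \<Longrightarrow> (u, v) \<in> A \<Longrightarrow> (h u, h v) \<in> B"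
  shows "dicolouring V A k (c \<circ> h)"
  unfolding dicolouring_def
proof (intro conjI ballI allI impI)
  fix i assume "i < k"
  then have "acyclic (induced_arcs B {w \<in> W. c w = i})" using c by (simp add: dicolouring_def)
  then show "acyclic (induced_arcs A {v \<in> V. (c \<circ> h) v = i})"
    by (rule acyclic_hom_preimage) (use assms(2) hom in \<open>auto simp: induced_arcs_def\<close>)
qed (use assms in \<open>auto simp: dicolouring_def\<close>)

lemma class_C3_merge_two_colours:
  assumes C3: "class_C3 V A" and c: "dicolouring V A k c" and "2 \<le> k"
    and proper: "\<And>x y. (x, y) \<in> A \<Longrightarrow> c x \<noteq> c y"
  shows "dicolouring V A (k - 1) (\<lambda>v. c v - 1)"
  unfolding dicolouring_def
proof (intro conjI ballI allI impI)
  fix i assume "i < k - 1"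
  show "acyclic (induced_arcs A {v \<in> V. c v - 1 = i})"
  proof (cases "i = 0")
    case True
    have "acyclic (induced_arcs A {v \<in> V. c v \<le> 1})"
      by (rule class_C3_two_coloured_acyclic[OF C3]) (auto dest: proper)
    moreover have "{v \<in> V. c v - 1 = i} = {v \<in> V. c v \<le> 1}" using True by auto
    ultimately show ?thesis by simp
  next
    case False
    then have "{v \<in> V. c v - 1 = i} = {v \<in> V. c v = i + 1}" by auto
    then show ?thesis using c \<open>i < k - 1\<close> by (simp add: dicolouring_def)
  qed
qed (use c \<open>2 \<le> k\<close> in \<open>fastforce simp: dicolouring_def\<close>)

lemma class_C3_dicolouring_monochromatic_arc:
  assumes C3: "class_C3 V A" and "dichromatic_number V A = k"
    and c: "dicolouring V A k c" and "A \<noteq> {}"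
  obtains x y where "(x, y) \<in> A" "c x = c y"
proof -
  have "\<exists>x y. (x, y) \<in> A \<and> c x = c y"
  proof (rule ccontr)
    assume "\<nexists>x y. (x, y) \<in> A \<and> c x = c y"
    then have proper: "\<And>x y. (x, y) \<in> A \<Longrightarrow> c x \<noteq> c y" by blast
    obtain x y where "(x, y) \<in> A" using \<open>A \<noteq> {}\<close> by auto
    moreover have "A \<subseteq> V \<times> V" using C3 by (simp add: class_C3_def digraph_def)
    ultimately have "c x < k" "c y < k" "c x \<noteq> c y" using proper c by (auto simp: dicolouring_def)
    then have "2 \<le> k" by linarith
    then have "dichromatic_number V A \<le> k - 1"
      using class_C3_merge_two_colours[OF C3 c _ proper] unfolding dichromatic_number_def
      by (blast intro: Least_le)
    then show False using assms(2) \<open>2 \<le> k\<close> by simp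
  qed
  then show thesis using that by blast
qed

section \<open>The gadget\<close>

text \<open>Copy \<open>i \<le> m\<close> of \<open>(V, A)\<close> is \<open>{i} \<times> V\<close>; \<open>e\<close> enumerates the arcs of copy 0, and the
  \<open>j\<close>-th of them, \<open>e j = (x, y)\<close>, is attached to the copy of \<open>I\<close> in copy \<open>j\<close> by the arcs
  \<open>(0, y) \<rightarrow> (j, v) \<rightarrow> (0, x)\<close>.\<close>
definition gadget_arcs ::
    "('a \<times> 'a) set \<Rightarrow> 'a set \<Rightarrow> nat \<Rightarrow> (nat \<Rightarrow> 'a \<times> 'a) \<Rightarrow> ((nat \<times> 'a) \<times> (nat \<times> 'a)) set" where
  "gadget_arcs A I m e =
     {((i, u), (i, v)) | i u v. i \<le> m \<and> (u, v) \<in> A}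
     \<union> {((0, snd (e j)), (j, v)) | j v. j \<in> {1..m} \<and> v \<in> I}
     \<union> {((j, v), (0, fst (e j))) | j v. j \<in> {1..m} \<and> v \<in> I}"

lemma gadget_arcs_iff:
  "((i, u), (j, v)) \<in> gadget_arcs A I m e \<longleftrightarrow>
     i = j \<and> i \<le> m \<and> (u, v) \<in> A
   \<or> i = 0 \<and> j \<in> {1..m} \<and> v \<in> I \<and> u = snd (e j)
   \<or> j = 0 \<and> i \<in> {1..m} \<and> u \<in> I \<and> v = fst (e i)"
  unfolding gadget_arcs_def by auto

lemma gadget_digraph:
  assumes dg: "digraph V A" and "I \<subseteq> V" and e: "\<forall>j\<in>{1..m}. e j \<in> A"
  shows "digraph ({..m} \<times> V) (gadget_arcs A I m e)"
proof -
  have e_V: "fst (e j) \<in> V" "snd (e j) \<in> V" "fst (e j) \<noteq> snd (e j)" if "j \<in> {1..m}" for j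
    using e that dg unfolding digraph_def by (metis mem_Sigma_iff prod.collapse subsetD)+
  have "gadget_arcs A I m e \<subseteq> ({..m} \<times> V) \<times> ({..m} \<times> V)"
  proof (clarify)
    fix i u j v assume "((i, u), (j, v)) \<in> gadget_arcs A I m e"
    then show "(i, u) \<in> {..m} \<times> V \<and> (j, v) \<in> {..m} \<times> V"
      using dg \<open>I \<subseteq> V\<close> e_V unfolding gadget_arcs_iff digraph_def by auto
  qed
  then show ?thesis
    using dg e_V unfolding digraph_def by (fastforce simp: gadget_arcs_iff)
qed

lemma gadget_no_transitive_arcs:
  assumes C3: "class_C3 V A" and I: "independent_set V A I" and e: "\<forall>j\<in>{1..m}. e j \<in> A"
    and "(p, q) \<in> gadget_arcs A I m e" "(q, r) \<in> gadget_arcs A I m e" "(p, r) \<in> gadget_arcs A I m e"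
  shows False
proof -
  have asym: "(v, u) \<notin> A" if "(u, v) \<in> A" for u v
    using C3 that by (auto simp: class_C3_def digraph_def)
  have loop: "(u, u) \<notin> A" for u
    using C3 by (auto simp: class_C3_def digraph_def)
  have indep: "(u, v) \<notin> A" if "u \<in> I" "v \<in> I" for u v
    using I that by (auto simp: independent_set_def)
  have e_A: "(fst (e j), snd (e j)) \<in> A" "(snd (e j), fst (e j)) \<notin> A" if "0 < j" "j \<le> m" for j
    using e that asym by auto
  obtain i1 u1 i2 u2 i3 u3 where "p = (i1, u1)" "q = (i2, u2)" "r = (i3, u3)"
    by (metis prod.collapse)
  with assms(4-6) show False
    by (cases "i2 = 0"; cases "i1 = i2"; cases "i2 = i3")
      (auto simp: gadget_arcs_iff loop e_A dest: asym indep class_C3_no_transitive_arcs[OF C3])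
qed

lemma gadget_no_TT3:
  assumes "class_C3 V A" and "independent_set V A I" and "\<forall>j\<in>{1..m}. e j \<in> A"
  shows "\<not> has_TT3 ({..m} \<times> V) (gadget_arcs A I m e)"
  unfolding has_TT3_def using gadget_no_transitive_arcs[OF assms] by blast

lemma exists_cyclic_transition:
  assumes "a < L" "b < L" "Q a" "\<not> Q b"
  obtains t where "t < L" "Q t" "\<not> Q (Suc t mod L)"
proof -
  have "\<exists>t<L. Q t \<and> \<not> Q (Suc t mod L)"
  proof (rule ccontr)
    assume "\<not> ?thesis"
    then have step: "Q (Suc t mod L)" if "t < L" "Q t" for t using that by blast
    have "Q ((a + d) mod L)" for d
    proof (induction d)
      case (Suc d)
      then have "Q (Suc ((a + d) mod L) mod L)" using step \<open>a < L\<close> by simp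
      then show ?case by (simp add: mod_Suc_eq)
    qed (use assms in simp)
    from this[of "b + L - a"] show False using assms by simp
  qed
  then show thesis using that by blast
qed

text \<open>A dicycle entering copy \<open>j \<ge> 1\<close> must do so from \<open>(0, snd (e j))\<close> and leave it towards
  \<open>(0, fst (e j))\<close>; these two vertices and the entry vertex span a directed triangle.\<close>
lemma gadget_dicycle_through_copy_triangle:
  assumes e: "\<forall>j\<in>{1..m}. e j \<in> A"
    and vs: "induced_dicycle ({..m} \<times> V) (gadget_arcs A I m e) vs"
    and "1 \<le> j" "a < length vs" "b < length vs" "fst (vs ! a) = j" "fst (vs ! b) \<noteq> j"
  obtains x y z where "x \<in> set vs" "y \<in> set vs" "z \<in> set vs" "(x, y) \<in> gadget_arcs A I m e"
    "(y, z) \<in> gadget_arcs A I m e" "(z, x) \<in> gadget_arcs A I m e"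
proof -
  define L where "L = length vs"
  have arc: "(vs ! t, vs ! (Suc t mod L)) \<in> gadget_arcs A I m e" if "t < L" for t
    using induced_dicycle_arc[OF vs] that unfolding L_def by simp
  have "vs ! a \<in> {..m} \<times> V"
    using vs assms(4) by (meson induced_dicycle_def nth_mem subsetD)
  then have j: "j \<in> {1..m}" using assms(3,6) by auto
  have "0 < L" using assms(4) unfolding L_def by linarith
  obtain t1 where t1: "t1 < L" "fst (vs ! t1) = j" "fst (vs ! (Suc t1 mod L)) \<noteq> j"
    using exists_cyclic_transition[of a L b "\<lambda>t. fst (vs ! t) = j"] assms(4-7) unfolding L_def by blast
  obtain t2 where t2: "t2 < L" "fst (vs ! t2) \<noteq> j" "fst (vs ! (Suc t2 mod L)) = j"
    using exists_cyclic_transition[of b L a "\<lambda>t. fst (vs ! t) \<noteq> j"] assms(4-7) unfolding L_def by blast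
  have leave: "vs ! (Suc t1 mod L) = (0, fst (e j))"
    using arc[OF t1(1)] t1(2,3) \<open>1 \<le> j\<close> by (cases "vs ! t1"; cases "vs ! (Suc t1 mod L)") (auto simp: gadget_arcs_iff)
  obtain v where enter: "vs ! t2 = (0, snd (e j))" "vs ! (Suc t2 mod L) = (j, v)" "v \<in> I"
    using arc[OF t2(1)] t2(2,3) \<open>1 \<le> j\<close> by (cases "vs ! t2"; cases "vs ! (Suc t2 mod L)") (auto simp: gadget_arcs_iff)
  have "(fst (e j), snd (e j)) \<in> A" using e j by simp
  then have "((0, fst (e j)), (0, snd (e j))) \<in> gadget_arcs A I m e"
    "((0, snd (e j)), (j, v)) \<in> gadget_arcs A I m e" "((j, v), (0, fst (e j))) \<in> gadget_arcs A I m e"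
    using j \<open>v \<in> I\<close> by (auto simp: gadget_arcs_iff)
  moreover have "vs ! (Suc t1 mod L) \<in> set vs" "vs ! t2 \<in> set vs" "vs ! (Suc t2 mod L) \<in> set vs"
    using t1(1) t2(1) \<open>0 < L\<close> unfolding L_def by simp_all
  ultimately show thesis using that leave enter by simp
qed

lemma gadget_no_long_induced_dicycle:
  assumes C3: "class_C3 V A" and e: "\<forall>j\<in>{1..m}. e j \<in> A"
    and vs: "induced_dicycle ({..m} \<times> V) (gadget_arcs A I m e) vs" and "4 \<le> length vs"
  shows False
proof -
  have "0 < length vs" using \<open>4 \<le> length vs\<close> by linarith
  then have "vs ! 0 \<in> set vs" by simp
  have vs_V: "set vs \<subseteq> {..m} \<times> V" using vs by (simp add: induced_dicycle_def)
  show False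
  proof (cases "\<exists>i. set vs \<subseteq> {i} \<times> V")
    case True
    then obtain i where i: "set vs \<subseteq> {i} \<times> V" by blast
    then have "i \<le> m" using vs_V \<open>vs ! 0 \<in> set vs\<close> by force
    have "induced_dicycle V A (map snd vs)"
    proof (rule induced_dicycle_map[OF vs])
      show "inj_on snd (set vs)" using i by (auto simp: inj_on_def)
      show "snd ` set vs \<subseteq> V" using i by auto
      fix x y assume "x \<in> set vs" "y \<in> set vs"
      with i have "x = (i, snd x)" "y = (i, snd y)" by auto
      then show "(snd x, snd y) \<in> A \<longleftrightarrow> (x, y) \<in> gadget_arcs A I m e"
        using \<open>i \<le> m\<close> by (metis gadget_arcs_iff atLeastAtMost_iff not_one_le_zero)
    qed
    then show False using C3 \<open>4 \<le> length vs\<close> by (auto simp: class_C3_def)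
  next
    case False
    with \<open>vs ! 0 \<in> set vs\<close> obtain p where "p \<in> set vs" "p \<notin> {fst (vs ! 0)} \<times> V" by blast
    with vs_V obtain t where t: "t < length vs" "fst (vs ! t) \<noteq> fst (vs ! 0)"
      by (metis in_set_conv_nth mem_Sigma_iff prod.collapse singletonI subsetD)
    obtain j a b where "1 \<le> j" "a < length vs" "b < length vs" "fst (vs ! a) = j" "fst (vs ! b) \<noteq> j"
    proof (cases "fst (vs ! 0) = 0")
      case True
      then show thesis using that[of "fst (vs ! t)" t 0] t \<open>0 < length vs\<close> by simp
    next
      case False
      then show thesis using that[of "fst (vs ! 0)" 0 t] t \<open>0 < length vs\<close> by simp
    qed
    with gadget_dicycle_through_copy_triangle[OF e vs] obtain x y z where
      "x \<in> set vs" "y \<in> set vs" "z \<in> set vs" "(x, y) \<in> gadget_arcs A I m e"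
      "(y, z) \<in> gadget_arcs A I m e" "(z, x) \<in> gadget_arcs A I m e"
      by blast
    then show False by (rule induced_dicycle_no_triangle[OF vs \<open>4 \<le> length vs\<close>])
  qed
qed

lemma gadget_class_C3:
  assumes C3: "class_C3 V A" and I: "independent_set V A I" and e: "\<forall>j\<in>{1..m}. e j \<in> A"
  shows "class_C3 ({..m} \<times> V) (gadget_arcs A I m e)"
  unfolding class_C3_def
  using gadget_digraph[of V A I m e] gadget_no_TT3[OF assms] gadget_no_long_induced_dicycle[OF C3 e]
    assms by (auto simp: class_C3_def independent_set_def)

lemma gadget_dicolouring_misses_colour:
  assumes C3: "class_C3 V A" and "dichromatic_number V A = k" and "A \<noteq> {}" and "I \<subseteq> V"
    and e: "A \<subseteq> e ` {1..m}" and c: "dicolouring ({..m} \<times> V) (gadget_arcs A I m e) k c"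
  obtains j \<alpha> where "j \<in> {1..m}" "\<alpha> < k" "\<forall>v\<in>I. c (j, v) \<noteq> \<alpha>"
proof -
  have AV: "A \<subseteq> V \<times> V" using C3 by (simp add: class_C3_def digraph_def)
  have "dicolouring V A k (c \<circ> Pair 0)"
    by (rule dicolouring_comp[OF c]) (auto simp: gadget_arcs_iff)
  then obtain x y where xy: "(x, y) \<in> A" "c (0, x) = c (0, y)"
    using class_C3_dicolouring_monochromatic_arc[OF C3 assms(2) _ \<open>A \<noteq> {}\<close>] by (metis comp_apply)
  with e obtain j where j: "j \<in> {1..m}" "e j = (x, y)" by force
  define \<alpha> where "\<alpha> = c (0, x)"
  have "x \<in> V" "y \<in> V" using xy AV by auto
  then have "\<alpha> < k" using c unfolding \<alpha>_def dicolouring_def by simp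
  have "c (j, v) \<noteq> \<alpha>" if "v \<in> I" for v
  proof
    assume "c (j, v) = \<alpha>"
    let ?S = "{p \<in> {..m} \<times> V. c p = \<alpha>}"
    have "(0, x) \<in> ?S" "(0, y) \<in> ?S" "(j, v) \<in> ?S"
      using \<open>x \<in> V\<close> \<open>y \<in> V\<close> \<open>v \<in> I\<close> \<open>I \<subseteq> V\<close> j xy(2) \<open>c (j, v) = \<alpha>\<close> unfolding \<alpha>_def by auto
    moreover have "((0, x), (0, y)) \<in> gadget_arcs A I m e" "((0, y), (j, v)) \<in> gadget_arcs A I m e"
      "((j, v), (0, x)) \<in> gadget_arcs A I m e"
      using xy(1) j \<open>v \<in> I\<close> by (auto simp: gadget_arcs_iff)
    ultimately have "\<not> acyclic (induced_arcs (gadget_arcs A I m e) ?S)"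
      by (intro triangle_not_acyclic) (auto simp: induced_arcs_def)
    then show False using c \<open>\<alpha> < k\<close> by (simp add: dicolouring_def)
  qed
  then show thesis using that j(1) \<open>\<alpha> < k\<close> by blast
qed

lemma card_gadget_arcs_le:
  assumes "finite A" and "finite I"
  shows "card (gadget_arcs A I m e) \<le> (m + 1) * card A + 2 * (m * card I)"
proof -
  define R1 where "R1 = (\<lambda>(i, a). ((i, fst a), (i, snd a))) ` ({..m} \<times> A)"
  define R2 where "R2 = (\<lambda>(j, v). ((0::nat, snd (e j)), (j, v))) ` ({1..m} \<times> I)"
  define R3 where "R3 = (\<lambda>(j, v). ((j, v), (0::nat, fst (e j)))) ` ({1..m} \<times> I)"
  have "gadget_arcs A I m e \<subseteq> R1 \<union> R2 \<union> R3"
    unfolding gadget_arcs_def R1_def R2_def R3_def by force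
  moreover have "finite (R1 \<union> R2 \<union> R3)" unfolding R1_def R2_def R3_def using assms by simp
  ultimately have "card (gadget_arcs A I m e) \<le> card (R1 \<union> R2 \<union> R3)" by (rule card_mono[rotated])
  also have "\<dots> \<le> card R1 + card R2 + card R3"
    by (meson card_Un_le le_trans add_le_mono order.refl)
  also have "\<dots> \<le> card ({..m} \<times> A) + card ({1..m} \<times> I) + card ({1..m} \<times> I)"
    unfolding R1_def R2_def R3_def by (intro add_mono card_image_le) (use assms in simp_all)
  finally show ?thesis by (simp add: card_cartesian_product)
qed

lemma card_gadget_arcs_bound:
  assumes "digraph V A" and "I \<subseteq> V" and "card V = n" and "card A = m" and "2 \<le> n"
  shows "card (gadget_arcs A I m e) \<le> m * (m + 1) + m * n ^ 2"
proof -
  have "finite V" "finite A" using assms(1) finite_subset by (auto simp: digraph_def)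
  then have "card I \<le> n" "finite I" using card_mono finite_subset \<open>I \<subseteq> V\<close> assms(3) by blast+
  then have "2 * card I \<le> n ^ 2"
    using mult_le_mono1[OF \<open>2 \<le> n\<close>, of n] unfolding power2_eq_square by linarith
  have "card (gadget_arcs A I m e) \<le> (m + 1) * m + 2 * (m * card I)"
    using card_gadget_arcs_le[OF \<open>finite A\<close> \<open>finite I\<close>] assms(4) by simp
  also have "\<dots> \<le> m * (m + 1) + m * n ^ 2"
    using mult_le_mono2[OF \<open>2 * card I \<le> n ^ 2\<close>, of m] by (simp add: algebra_simps)
  finally show ?thesis .
qed

lemma map_prod_image_arc_iff:
  assumes "R \<subseteq> P \<times> P" and "inj_on F P" and "a \<in> P" "b \<in> P"
  shows "(F a, F b) \<in> map_prod F F ` R \<longleftrightarrow> (a, b) \<in> R"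
  using assms by (auto simp: inj_on_eq_iff)

lemma class_C3_image:
  assumes C3: "class_C3 P R" and inj: "inj_on F P"
  shows "class_C3 (F ` P) (map_prod F F ` R)"
proof -
  have RP: "R \<subseteq> P \<times> P" using C3 by (simp add: class_C3_def digraph_def)
  note arc_iff = map_prod_image_arc_iff[OF RP inj]
  have dg: "digraph P R" using C3 by (simp add: class_C3_def)
  have "digraph (F ` P) (map_prod F F ` R)"
    unfolding digraph_def
  proof (intro conjI allI impI)
    fix u v assume "(u, v) \<in> map_prod F F ` R"
    then obtain x y where xy: "(x, y) \<in> R" "u = F x" "v = F y" by auto
    then have "x \<in> P" "y \<in> P" using RP by auto
    then have "(F y, F x) \<notin> map_prod F F ` R"
      using dg xy(1) by (simp only: arc_iff) (simp add: digraph_def)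
    then show "(v, u) \<notin> map_prod F F ` R" using xy by simp
  qed (use dg RP in \<open>auto simp: digraph_def inj_on_eq_iff[OF inj]\<close>)
  moreover have "\<not> has_TT3 (F ` P) (map_prod F F ` R)"
    using C3 unfolding class_C3_def has_TT3_def by (auto simp: arc_iff) metis
  moreover have "\<not> induced_dicycle (F ` P) (map_prod F F ` R) vs" if "4 \<le> length vs" for vs
  proof
    assume vs: "induced_dicycle (F ` P) (map_prod F F ` R) vs"
    then have vs_P: "set vs \<subseteq> F ` P" by (simp add: induced_dicycle_def)
    have "induced_dicycle P R (map (inv_into P F) vs)"
    proof (rule induced_dicycle_map[OF vs])
      show "inj_on (inv_into P F) (set vs)" using vs_P by (rule inj_on_inv_into)
      show "inv_into P F ` set vs \<subseteq> P" using vs_P by (auto intro: inv_into_into)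
      fix x y assume "x \<in> set vs" "y \<in> set vs"
      then show "(inv_into P F x, inv_into P F y) \<in> R \<longleftrightarrow> (x, y) \<in> map_prod F F ` R"
        using vs_P arc_iff[of "inv_into P F x" "inv_into P F y"]
        by (auto simp: f_inv_into_f inv_into_into subsetD)
    qed
    then show False using C3 that by (auto simp: class_C3_def)
  qed
  ultimately show ?thesis unfolding class_C3_def by blast
qed

lemma is_copy_gadget:
  assumes "i \<le> m"
  shows "is_copy V A ({..m} \<times> V) (gadget_arcs A I m e) (Pair i)"
  using assms by (auto simp: is_copy_def gadget_arcs_iff inj_on_def)

lemma is_copy_image:
  assumes "is_copy V A P R g" and "R \<subseteq> P \<times> P" and "inj_on F P"
  shows "is_copy V A (F ` P) (map_prod F F ` R) (F \<circ> g)"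
proof -
  have g: "inj_on g V" "g ` V \<subseteq> P" "\<And>u v. u \<in> V \<Longrightarrow> v \<in> V \<Longrightarrow> (g u, g v) \<in> R \<longleftrightarrow> (u, v) \<in> A"
    using assms(1) by (auto simp: is_copy_def)
  show ?thesis
    unfolding is_copy_def
  proof (intro conjI ballI)
    show "inj_on (F \<circ> g) V" using g assms(3) by (simp add: comp_inj_on inj_on_subset)
    show "(F \<circ> g) ` V \<subseteq> F ` P" using g by auto
    fix u v assume "u \<in> V" "v \<in> V"
    with g have "g u \<in> P" "g v \<in> P" by auto
    with \<open>u \<in> V\<close> \<open>v \<in> V\<close> show "((F \<circ> g) u, (F \<circ> g) v) \<in> map_prod F F ` R \<longleftrightarrow> (u, v) \<in> A"
      by (simp only: comp_apply map_prod_image_arc_iff[OF assms(2,3)] g(3))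
  qed
qed

lemma gadget_image_dicolouring_misses_colour:
  assumes "class_C3 V A" and "dichromatic_number V A = k" and "A \<noteq> {}" and "I \<subseteq> V"
    and "A \<subseteq> e ` {1..m}"
    and c: "dicolouring (F ` ({..m} \<times> V)) (map_prod F F ` gadget_arcs A I m e) k c"
  shows "\<exists>j\<in>{1..m}. \<exists>\<alpha><k. \<forall>v\<in>I. c (F (j, v)) \<noteq> \<alpha>"
proof -
  have "dicolouring ({..m} \<times> V) (gadget_arcs A I m e) k (c \<circ> F)"
    by (rule dicolouring_comp[OF c]) auto
  then obtain j \<alpha> where "j \<in> {1..m}" "\<alpha> < k" "\<forall>v\<in>I. (c \<circ> F) (j, v) \<noteq> \<alpha>"
    by (rule gadget_dicolouring_misses_colour[OF assms(1-5)])
  then show ?thesis by (auto intro!: bexI[of _ j])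
qed

lemma inj_on_copies_disjoint:
  assumes "inj_on F (J \<times> V)" and "i \<in> J" "j \<in> J" "i \<noteq> j"
  shows "(\<lambda>u. F (i, u)) ` V \<inter> (\<lambda>u. F (j, u)) ` V = {}"
  using assms by (auto simp: inj_on_eq_iff)

lemma digraph_card_ge_2:
  assumes "digraph V A" and "(x, y) \<in> A"
  shows "2 \<le> card V"
proof -
  have "finite V" "{x, y} \<subseteq> V" "x \<noteq> y" using assms by (auto simp: digraph_def)
  then show ?thesis using card_mono[of V "{x, y}"] by simp
qed

lemma digraph_card_arcs_le:
  assumes "digraph V A"
  shows "2 * card A \<le> card V ^ 2"
proof -
  have fin: "finite V" and "A \<subseteq> V \<times> V" "A \<inter> A\<inverse> = {}"
    using assms by (auto simp: digraph_def)
  moreover have "finite A" using fin \<open>A \<subseteq> V \<times> V\<close> finite_subset by blast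
  ultimately have "2 * card A = card (A \<union> A\<inverse>)" by (simp add: card_Un_disjoint)
  also have "\<dots> \<le> card (V \<times> V)" using fin \<open>A \<subseteq> V \<times> V\<close> by (intro card_mono) auto
  finally show ?thesis by (simp add: card_cartesian_product power2_eq_square)
qed

lemma quartic_size_bounds:
  fixes m n :: nat
  assumes "2 * m \<le> n ^ 2" and "2 \<le> n"
  shows "n * (m + 1) \<le> n ^ 4" and "m * (m + 1) + m * n ^ 2 \<le> n ^ 4"
proof -
  define N where "N = n ^ 2"
  have n4: "n ^ 4 = N * N" unfolding N_def by algebra
  have "n \<le> N" "4 \<le> N" unfolding N_def using \<open>2 \<le> n\<close> power_mono[OF \<open>2 \<le> n\<close>, of 2]
    by (simp_all add: power2_eq_square)
  then have "m + 1 \<le> N" using assms(1) unfolding N_def by linarith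
  show "n * (m + 1) \<le> n ^ 4" unfolding n4 using \<open>n \<le> N\<close> \<open>m + 1 \<le> N\<close> by (rule mult_le_mono)
  have "2 * (m * (m + 1) + m * N) = (2 * m) * (m + 1) + (2 * m) * N" by algebra
  also have "\<dots> \<le> N * N + N * N"
    using assms(1) \<open>m + 1 \<le> N\<close> unfolding N_def[symmetric] by (intro add_mono mult_le_mono) auto
  finally show "m * (m + 1) + m * n ^ 2 \<le> n ^ 4" unfolding n4 N_def by simp
qed

theorem lemma1:
  fixes V :: "'a set" and A :: "('a \<times> 'a) set" and I :: "'a set" and k n m :: nat
  assumes "k \<ge> 1"
    and "class_C3 V A"
    and "card V = n" and "card A = m" and "m \<ge> 1"
    and "dichromatic_number V A = k"
    and "independent_set V A I"
  shows "\<exists>(W :: nat set) (B :: (nat \<times> nat) set) (f :: nat \<Rightarrow> 'a \<Rightarrow> nat).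
     class_C3 W B
     \<and> (\<forall>i\<in>{1..m}. is_copy V A W B (f i))
     \<and> (\<forall>i\<in>{1..m}. \<forall>j\<in>{1..m}. i \<noteq> j \<longrightarrow> f i ` V \<inter> f j ` V = {})
     \<and> (\<forall>i\<in>{1..m}. \<forall>j\<in>{1..m}. i \<noteq> j \<longrightarrow>
          (\<forall>u\<in>V. \<forall>v\<in>V. (f i u, f j v) \<notin> B))
     \<and> (\<forall>c. dicolouring W B k c \<longrightarrow>
          (\<exists>i\<in>{1..m}. \<exists>\<alpha><k. \<forall>v\<in>I. c (f i v) \<noteq> \<alpha>))
     \<and> card W = n * (m + 1) \<and> n * (m + 1) \<le> n ^ 4
     \<and> card B \<le> m * (m + 1) + m * n ^ 2 \<and> m * (m + 1) + m * n ^ 2 \<le> n ^ 4"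
proof -
  have dg: "digraph V A" using assms(2) by (simp add: class_C3_def)
  then have "finite V" "finite A" "I \<subseteq> V"
    using assms(7) finite_subset by (auto simp: digraph_def independent_set_def)
  obtain e where "bij_betw e {1..m} A"
    using ex_bij_betw_nat_finite_1[OF \<open>finite A\<close>] assms(4) by blast
  then have e: "\<forall>j\<in>{1..m}. e j \<in> A" and "A \<subseteq> e ` {1..m}" by (auto simp: bij_betw_def)
  let ?P = "{..m} \<times> V" and ?R = "gadget_arcs A I m e"
  obtain F :: "nat \<times> 'a \<Rightarrow> nat" where F: "inj_on F ?P"
    using finite_imp_inj_to_nat_seg[of ?P] \<open>finite V\<close> by blast
  have RP: "?R \<subseteq> ?P \<times> ?P" using gadget_digraph[OF dg \<open>I \<subseteq> V\<close> e] by (simp add: digraph_def)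
  have "A \<noteq> {}" using assms(4,5) by auto
  then have "2 \<le> n" using digraph_card_ge_2[OF dg] assms(3) by auto
  note colouring = gadget_image_dicolouring_misses_colour[OF assms(2,6) \<open>A \<noteq> {}\<close> \<open>I \<subseteq> V\<close>
      \<open>A \<subseteq> e ` {1..m}\<close>, of F]
  have copies: "is_copy V A (F ` ?P) (map_prod F F ` ?R) (\<lambda>u. F (i, u))" if "i \<le> m" for i
    using is_copy_image[OF is_copy_gadget[OF that] RP F] unfolding comp_def .
  have "card (map_prod F F ` ?R) \<le> m * (m + 1) + m * n ^ 2"
  proof -
    have "finite ?R" using finite_subset[OF RP] \<open>finite V\<close> by simp
    then show ?thesis using card_image_le[of ?R "map_prod F F"]
        card_gadget_arcs_bound[OF dg \<open>I \<subseteq> V\<close> assms(3,4) \<open>2 \<le> n\<close>, of e] by linarith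
  qed
  moreover have "card (F ` ?P) = n * (m + 1)"
    using card_image[OF F] assms(3) by (simp add: card_cartesian_product)
  ultimately show ?thesis
    using class_C3_image[OF gadget_class_C3[OF assms(2,7) e] F] copies inj_on_copies_disjoint[OF F]
      map_prod_image_arc_iff[OF RP F] colouring
      quartic_size_bounds[OF _ \<open>2 \<le> n\<close>] digraph_card_arcs_le[OF dg] assms(3,4)
    by (intro exI[of _ "F ` ?P"] exI[of _ "map_prod F F ` ?R"] exI[of _ "\<lambda>i u. F (i, u)"])
      (auto simp: gadget_arcs_iff)
qed

end
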